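(* Let $C$ be a nonempty proper subset of $V$ and $\lambda=d(\chi_C)$. Then $V^c_O\cap V^c_\lambda$ is contained in an affine subspace of $K$ of codimension $\kappa(C,V\setminus C)$. In particular, if $V^c_O\cap V^c_\lambda$ is a face of codimension one, then $\kappa(C,V\setminus C)=1$, i.e. the cut defined by $C$ is a bond.
   Context: $G=(V,E)$ is a finite connected graph; each edge gives oriented edges $e,\bar e$. Real $1$-cochains are $x$ on oriented edges with $x_{\bar e}=-x_e$, $\langle x,y\rangle=\sum_{e\in E}x_ey_e$, $q(x)=\langle x,x\rangle$. For $f:V\to\mathbb R$, $d(f)(e)=f(\text{head}(e))-f(\text{tail}(e))$; $K=d(\mathbb R^V)$ and $L=d(\mathbb Z^V)$. $V^c_\lambda=\{x\in K: q(x-\lambda)\le q(x-\mu)\ \forall\mu\in L\}$. $\chi_C$ is the characteristic function of $C$. If $G[C]$ has $k$ connected components and $G[V\setminus C]$ has $r$ connected components, the rank of the cut is $\kappa(C,V\setminus C)=k+r-1$; the cut is a bond when this rank is $1$. *)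

theory Defs
  imports "HOL-Analysis.Analysis"
begin

text \<open>A finite graph: vertices are the elements of the finite type 'v, edges the
elements of the finite type 'e; each edge e carries a fixed reference orientation
from tail e to head e (multi-edges and loops allowed). A real 1-cochain is
determined by its values on the reference orientations, i.e. it is a vector in
real^'e (the value on the reversed edge is the negative).\<close>

definition adj_in :: "('e \<Rightarrow> 'v) \<Rightarrow> ('e \<Rightarrow> 'v) \<Rightarrow> 'v set \<Rightarrow> ('v \<times> 'v) set" where
  "adj_in tail head S = {(u, w). u \<in> S \<and> w \<in> S \<and>
      (\<exists>e. (tail e = u \<and> head e = w) \<or> (tail e = w \<and> head e = u))}"

definition components_in :: "('e \<Rightarrow> 'v) \<Rightarrow> ('e \<Rightarrow> 'v) \<Rightarrow> 'v set \<Rightarrow> 'v set set" where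
  "components_in tail head S = S // (Id_on S \<union> (adj_in tail head S)\<^sup>+)"

definition graph_connected :: "('e \<Rightarrow> 'v) \<Rightarrow> ('e \<Rightarrow> 'v) \<Rightarrow> bool" where
  "graph_connected tail head \<longleftrightarrow> card (components_in tail head UNIV) = 1"

definition cut_rank :: "('e \<Rightarrow> 'v) \<Rightarrow> ('e \<Rightarrow> 'v) \<Rightarrow> 'v set \<Rightarrow> nat" where
  "cut_rank tail head C = card (components_in tail head C) + card (components_in tail head (UNIV - C)) - 1"

definition cobd :: "('e \<Rightarrow> 'v) \<Rightarrow> ('e \<Rightarrow> 'v) \<Rightarrow> ('v \<Rightarrow> real) \<Rightarrow> real^'e" where
  "cobd tail head f = (\<chi> e. f (head e) - f (tail e))"

definition cutspaceK :: "('e \<Rightarrow> 'v) \<Rightarrow> ('e \<Rightarrow> 'v) \<Rightarrow> (real^'e) set" where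
  "cutspaceK tail head = range (cobd tail head)"

definition latticeL :: "('e \<Rightarrow> 'v) \<Rightarrow> ('e \<Rightarrow> 'v) \<Rightarrow> (real^'e) set" where
  "latticeL tail head = {cobd tail head (\<lambda>v. of_int (g v)) | g :: 'v \<Rightarrow> int. True}"

definition qf :: "real^'e \<Rightarrow> real" where
  "qf x = (\<Sum>e\<in>UNIV. (x $ e)\<^sup>2)"

definition voronoi :: "('e::finite \<Rightarrow> 'v) \<Rightarrow> ('e \<Rightarrow> 'v) \<Rightarrow> real^'e \<Rightarrow> (real^'e) set" where
  "voronoi tail head lam = {x \<in> cutspaceK tail head. \<forall>\<mu>\<in>latticeL tail head. qf (x - lam) \<le> qf (x - \<mu>)}"

end

theory Submission
  imports Defs
begin

text \<open>
  The cut \<open>(C, V - C)\<close>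
  splits the vertices into the \<open>k + r\<close> blocks formed by the components of \<open>G[C]\<close> and of
  \<open>G[V - C]\<close>.  For a block \<open>P\<close> put \<open>\<nu> = \<plusminus>d(\<chi>\<^sub>P)\<close> (sign \<open>+\<close> inside \<open>C\<close>, \<open>-\<close> outside).
  Then \<open>\<nu>\<close> and \<open>\<lambda> - \<nu>\<close> are lattice points and \<open>\<langle>\<lambda>,\<nu>\<rangle> = \<langle>\<nu>,\<nu>\<rangle>\<close>; comparing the distances from a
  point \<open>x \<in> V\<^sub>0 \<inter> V\<^sub>\<lambda>\<close> to \<open>0, \<nu>, \<lambda>, \<lambda> - \<nu>\<close> forces \<open>2\<langle>x,\<nu>\<rangle> = \<langle>\<nu>,\<nu>\<rangle>\<close>.  Hence
  \<open>V\<^sub>0 \<inter> V\<^sub>\<lambda>\<close> lies in a translate of the orthogonal complement, inside \<open>K\<close>, of the span of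
  the vectors \<open>d(\<chi>\<^sub>P)\<close>.  The indicator vectors of the blocks are independent and sum to the
  constant vector, which spans the kernel of \<open>d\<close> on a connected graph; so that span has
  dimension \<open>k + r - 1 = \<kappa>(C, V - C)\<close>.

  The codimension-one statement
  follows because \<open>V\<^sub>0 \<inter> V\<^sub>\<lambda>\<close> cannot have larger affine dimension than the affine subspace.
\<close>

definition component_rel :: "('e \<Rightarrow> 'v) \<Rightarrow> ('e \<Rightarrow> 'v) \<Rightarrow> 'v set \<Rightarrow> ('v \<times> 'v) set" where
  "component_rel tail head S = Id_on S \<union> (adj_in tail head S)\<^sup>+"

lemma equiv_component_rel: "equiv S (component_rel tail head S)"
proof (rule equivI)
  have adj: "adj_in tail head S \<subseteq> S \<times> S" "sym (adj_in tail head S)"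
    unfolding adj_in_def sym_def by auto
  then have trancl_sub: "(adj_in tail head S)\<^sup>+ \<subseteq> S \<times> S"
    using trancl_subset_Sigma by metis
  show "refl_on S (component_rel tail head S)" "component_rel tail head S \<subseteq> S \<times> S"
    unfolding refl_on_def component_rel_def using trancl_sub by auto
  show "sym (component_rel tail head S)"
    using sym_trancl[OF adj(2)] unfolding component_rel_def sym_def by auto
  show "trans (component_rel tail head S)"
    unfolding component_rel_def trans_def by (auto intro: trancl_trans)
qed

lemma components_in_quotient: "components_in tail head S = S // component_rel tail head S"
  unfolding components_in_def component_rel_def ..

lemma component_subset:
  assumes "P \<in> components_in tail head S"
  shows "P \<noteq> {}" "P \<subseteq> S"
  using in_quotient_imp_non_empty[OF equiv_component_rel] in_quotient_imp_subset[OF equiv_component_rel]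
    assms unfolding components_in_quotient by blast+

lemma components_disjoint:
  assumes "P \<in> components_in tail head S" "Q \<in> components_in tail head S" "P \<noteq> Q"
  shows "P \<inter> Q = {}"
  using quotient_disj[OF equiv_component_rel] assms unfolding components_in_quotient by blast

lemma Union_components: "\<Union> (components_in tail head S) = S"
  unfolding components_in_quotient by (rule Union_quotient[OF equiv_component_rel])

lemma component_edge_closed:
  assumes P: "P \<in> components_in tail head S" and "u \<in> P" "w \<in> S"
    and "(tail e = u \<and> head e = w) \<or> (tail e = w \<and> head e = u)"
  shows "w \<in> P"
proof -
  have "u \<in> S" using component_subset(2)[OF P] \<open>u \<in> P\<close> by blast
  then have "(u, w) \<in> adj_in tail head S"
    using assms(3,4) unfolding adj_in_def by blast
  then have "(u, w) \<in> component_rel tail head S"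
    unfolding component_rel_def by blast
  moreover have "P \<in> S // component_rel tail head S"
    using P unfolding components_in_quotient .
  ultimately show ?thesis
    using in_quotient_imp_closed[OF equiv_component_rel] \<open>u \<in> P\<close> by metis
qed

lemma connected_component_rel:
  fixes tail head :: "'e \<Rightarrow> 'v"
  assumes "graph_connected tail head"
  shows "(u, w) \<in> component_rel tail head UNIV"
proof -
  let ?R = "component_rel tail head (UNIV :: 'v set)"
  have "card (UNIV // ?R) = 1"
    using assms unfolding graph_connected_def components_in_quotient .
  then obtain Q where Q: "UNIV // ?R = {Q}" by (rule card_1_singletonE)
  have "?R `` {u} \<in> UNIV // ?R" "?R `` {w} \<in> UNIV // ?R"
    by (rule quotientI, simp)+
  then have "?R `` {u} = ?R `` {w}" using Q by auto
  moreover have "w \<in> ?R `` {w}"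
    using equiv_component_rel[of UNIV tail head] unfolding equiv_def refl_on_def by auto
  ultimately show ?thesis by auto
qed

definition cut_blocks :: "('e \<Rightarrow> 'v) \<Rightarrow> ('e \<Rightarrow> 'v) \<Rightarrow> 'v set \<Rightarrow> 'v set set" where
  "cut_blocks tail head C = components_in tail head C \<union> components_in tail head (UNIV - C)"

lemma cut_blocks_partition:
  shows "P \<in> cut_blocks tail head C \<Longrightarrow> P \<noteq> {}"
    and "P \<in> cut_blocks tail head C \<Longrightarrow> Q \<in> cut_blocks tail head C \<Longrightarrow> P \<noteq> Q \<Longrightarrow> P \<inter> Q = {}"
    and "\<exists>P \<in> cut_blocks tail head C. v \<in> P"
proof -
  show "P \<in> cut_blocks tail head C \<Longrightarrow> P \<noteq> {}"
    unfolding cut_blocks_def using component_subset(1) by blast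
  show "P \<inter> Q = {}" if PQ: "P \<in> cut_blocks tail head C" "Q \<in> cut_blocks tail head C" "P \<noteq> Q"
  proof -
    have sides: "X \<subseteq> C" "Y \<subseteq> UNIV - C"
      if "X \<in> components_in tail head C" "Y \<in> components_in tail head (UNIV - C)" for X Y
      using component_subset(2) that by blast+
    show ?thesis
      using PQ components_disjoint[of P tail head C Q] components_disjoint[of P tail head "UNIV - C" Q]
        sides[of P Q] sides[of Q P]
      unfolding cut_blocks_def by blast
  qed
  show "\<exists>P \<in> cut_blocks tail head C. v \<in> P"
    using Union_components[of tail head C] Union_components[of tail head "UNIV - C"]
    unfolding cut_blocks_def by blast
qed

lemma card_cut_blocks:
  fixes C :: "'v::finite set"
  assumes "C \<noteq> {}" "C \<noteq> UNIV"
  shows "card (cut_blocks tail head C) = cut_rank tail head C + 1" "cut_rank tail head C \<ge> 1"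
proof -
  let ?CC = "components_in tail head C" and ?DD = "components_in tail head (UNIV - C)"
  have "?CC \<inter> ?DD = {}" using component_subset by blast
  then have card: "card (cut_blocks tail head C) = card ?CC + card ?DD"
    unfolding cut_blocks_def by (simp add: card_Un_disjoint)
  have "?CC \<noteq> {}" "?DD \<noteq> {}"
    using assms Union_components[of tail head C] Union_components[of tail head "UNIV - C"] by auto
  then have "card ?CC \<ge> 1" "card ?DD \<ge> 1" by (simp_all add: Suc_le_eq card_gt_0_iff)
  then show "card (cut_blocks tail head C) = cut_rank tail head C + 1" "cut_rank tail head C \<ge> 1"
    unfolding card cut_rank_def by simp_all
qed

lemma dim_image_line_kernel:
  fixes D :: "'a::euclidean_space \<Rightarrow> 'b::euclidean_space"
  assumes D: "linear D" and U: "subspace U"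
    and c: "c \<in> U" "c \<noteq> 0" "D c = 0"
    and ker: "\<And>h. h \<in> U \<Longrightarrow> D h = 0 \<Longrightarrow> h \<in> span {c}"
  shows "dim (D ` U) + 1 = dim U"
proof -
  define U' where "U' = {f \<in> U. \<forall>y \<in> span {c}. orthogonal y f}"
  have "span {c} \<subseteq> U" using c(1) U by (simp add: span_minimal)
  then have dim_U': "dim U' + 1 = dim U"
    using dim_subspace_orthogonal_to_vectors[OF subspace_span U, of "{c}"] c(2) unfolding U'_def by simp
  have subspace_U': "subspace U'"
  proof -
    have "U' = U \<inter> {f. \<forall>y \<in> span {c}. orthogonal y f}" unfolding U'_def by auto
    then show ?thesis using subspace_inter[OF U subspace_orthogonal_to_vectors] by simp
  qed
  \<comment> \<open>Projecting away the kernel direction does not change the image \<dots>\<close>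
  have same_image: "D ` U = D ` U'"
  proof
    show "D ` U' \<subseteq> D ` U" unfolding U'_def by auto
    show "D ` U \<subseteq> D ` U'"
    proof
      fix z assume "z \<in> D ` U"
      then obtain f where f: "f \<in> U" "z = D f" by auto
      define f' where "f' = f - ((c \<bullet> f) / (c \<bullet> c)) *\<^sub>R c"
      have "f' \<in> U" unfolding f'_def using f(1) c(1) U by (simp add: subspace_diff subspace_scale)
      moreover have "orthogonal y f'" if "y \<in> span {c}" for y
        using that c(2) unfolding f'_def orthogonal_def span_singleton
        by (auto simp: inner_diff_right)
      moreover have "D f' = z" unfolding f'_def f(2) using D c(3) by (simp add: linear_diff linear_scale)
      ultimately show "z \<in> D ` U'" unfolding U'_def by blast
    qed
  qed
  have "inj_on D U'"
  proof (rule inj_onI)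
    fix f g assume fg: "f \<in> U'" "g \<in> U'" "D f = D g"
    then have "f - g \<in> U'" using subspace_U' subspace_diff by blast
    moreover have "D (f - g) = 0" using D fg(3) by (simp add: linear_diff)
    ultimately have "f - g \<in> span {c}" "orthogonal (f - g) (f - g)"
      using ker unfolding U'_def by blast+
    then show "f = g" unfolding orthogonal_def by simp
  qed
  then have "dim (D ` U') = dim U'"
    using dim_image_eq[OF D] span_eq_iff[of U'] subspace_U' by metis
  then show ?thesis using same_image dim_U' by simp
qed

lemma affine_subspace_through_level_set:
  fixes K :: "'a::euclidean_space set"
  assumes K: "subspace K" and B: "B \<subseteq> K" and I: "I \<subseteq> K"
    and level: "\<And>x y b. x \<in> I \<Longrightarrow> y \<in> I \<Longrightarrow> b \<in> B \<Longrightarrow> (x - y) \<bullet> b = 0"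
  shows "\<exists>A. A \<noteq> {} \<and> affine A \<and> A \<subseteq> K \<and> I \<subseteq> A \<and> aff_dim A = int (dim K) - int (dim B)"
proof -
  define W where "W = {y \<in> K. \<forall>a \<in> span B. orthogonal a y}"
  have "dim W + dim B = dim K"
    using dim_subspace_orthogonal_to_vectors[OF subspace_span K span_minimal[OF B K]]
    unfolding W_def by simp
  moreover have W: "subspace W"
  proof -
    have "W = K \<inter> {y. \<forall>a \<in> span B. orthogonal a y}" unfolding W_def by auto
    then show ?thesis using subspace_inter[OF K subspace_orthogonal_to_vectors] by simp
  qed
  moreover obtain x0 where x0: "x0 \<in> K" "I \<subseteq> (+) x0 ` W"
  proof (cases "I = {}")
    case True
    then show ?thesis using that[of 0] K subspace_0 by blast
  next
    case False
    then obtain x0 where "x0 \<in> I" by blast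
    have "y - x0 \<in> W" if "y \<in> I" for y
    proof -
      have "orthogonal (y - x0) a" if "a \<in> span B" for a
        using orthogonal_to_span[OF that] level[OF \<open>y \<in> I\<close> \<open>x0 \<in> I\<close>] unfolding orthogonal_def by blast
      then show ?thesis
        unfolding W_def using subspace_diff[OF K] I \<open>y \<in> I\<close> \<open>x0 \<in> I\<close> orthogonal_commute by blast
    qed
    then have "I \<subseteq> (+) x0 ` W" by (metis add_diff_cancel_left' add_diff_eq image_eqI subsetI)
    then show ?thesis using that \<open>x0 \<in> I\<close> I by blast
  qed
  moreover have "(+) x0 ` W \<subseteq> K"
    using x0(1) subspace_add[OF K] unfolding W_def by blast
  moreover have "(+) x0 ` W \<noteq> {}" "affine ((+) x0 ` W)"
    using W subspace_0 affine_translation subspace_imp_affine by blast+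
  ultimately show ?thesis
    by (intro exI[of _ "(+) x0 ` W"]) (simp add: aff_dim_translation_eq aff_dim_subspace)
qed

text \<open>The coboundary as a map on vectors \<open>real^'v\<close>, so that linear algebra applies to it.\<close>

definition cobd_vec :: "('e \<Rightarrow> 'v) \<Rightarrow> ('e \<Rightarrow> 'v) \<Rightarrow> real^'v \<Rightarrow> real^'e" where
  "cobd_vec tail head f = cobd tail head (\<lambda>v. f $ v)"

definition indicator_vec :: "'v set \<Rightarrow> real^'v" where
  "indicator_vec S = (\<chi> v. if v \<in> S then 1 else 0)"

lemma linear_cobd_vec: "linear (cobd_vec tail head)"
  by (rule linearI) (auto simp: cobd_vec_def cobd_def vec_eq_iff algebra_simps)

lemma cutspaceK_eq_range: "cutspaceK tail head = range (cobd_vec tail head)"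
proof -
  have "cobd tail head f = cobd_vec tail head (\<chi> v. f v)" for f
    by (simp add: cobd_vec_def)
  then show ?thesis unfolding cutspaceK_def cobd_vec_def by (auto simp: image_def)
qed

lemma cobd_vec_indicator:
  "cobd_vec tail head (indicator_vec S) = cobd tail head (\<lambda>v. if v \<in> S then 1 else 0)"
  by (simp add: cobd_vec_def indicator_vec_def)

lemma cobd_vec_const: "cobd_vec tail head (\<chi> v. c) = 0"
  by (simp add: cobd_vec_def cobd_def vec_eq_iff)

lemma cobd_vec_kernel:
  fixes tail head :: "'e::finite \<Rightarrow> 'v::finite"
  assumes conn: "graph_connected tail head" and h: "cobd_vec tail head h = 0"
  shows "h \<in> span {\<chi> v. 1}"
proof -
  have edge: "h $ u = h $ w" if adj: "(u, w) \<in> adj_in tail head UNIV" for u w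
  proof -
    obtain e where "(tail e = u \<and> head e = w) \<or> (tail e = w \<and> head e = u)"
      using adj unfolding adj_in_def by blast
    moreover have "h $ head e - h $ tail e = 0"
      using h unfolding cobd_vec_def cobd_def by (metis vec_lambda_beta zero_index)
    ultimately show ?thesis by auto
  qed
  have "h $ u = h $ w" if "(u, w) \<in> (adj_in tail head UNIV)\<^sup>+" for u w
    using that by (induction rule: trancl_induct) (auto dest: edge)
  then have const: "h $ u = h $ w" for u w
    using connected_component_rel[OF conn, of u w] unfolding component_rel_def by auto
  then have "h = (h $ v0) *\<^sub>R (\<chi> v. 1)" for v0 by (simp add: vec_eq_iff)
  then show ?thesis by (metis span_base span_scale singletonI)
qed

lemma partition_indicator_vecs:
  fixes Ps :: "'v::finite set set"
  assumes nonempty: "\<And>P. P \<in> Ps \<Longrightarrow> P \<noteq> {}"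
    and disjoint: "\<And>P Q. P \<in> Ps \<Longrightarrow> Q \<in> Ps \<Longrightarrow> P \<noteq> Q \<Longrightarrow> P \<inter> Q = {}"
    and cover: "\<And>v. \<exists>P \<in> Ps. v \<in> P"
  shows "dim (indicator_vec ` Ps) = card Ps" "(\<chi> v. 1) \<in> span (indicator_vec ` Ps)"
proof -
  have ind: "indicator_vec P $ v = (if v \<in> P then 1 else 0)" for P v
    unfolding indicator_vec_def by simp
  have "inj_on indicator_vec Ps"
  proof (rule inj_onI)
    fix P Q assume "indicator_vec P = indicator_vec Q"
    then have "(v \<in> P) = (v \<in> Q)" for v by (metis ind zero_neq_one)
    then show "P = Q" by blast
  qed
  moreover have "independent (indicator_vec ` Ps)"
  proof (rule pairwise_orthogonal_independent)
    show "pairwise orthogonal (indicator_vec ` Ps)"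
    proof (rule pairwiseI)
      fix x y assume "x \<in> indicator_vec ` Ps" "y \<in> indicator_vec ` Ps" "x \<noteq> y"
      then obtain P Q where "P \<in> Ps" "Q \<in> Ps" "P \<noteq> Q" "x = indicator_vec P" "y = indicator_vec Q"
        by blast
      then show "orthogonal x y"
        using disjoint unfolding orthogonal_def inner_vec_def
        by (intro sum.neutral) (auto simp: ind)
    qed
    show "0 \<notin> indicator_vec ` Ps"
    proof
      assume "0 \<in> indicator_vec ` Ps"
      then obtain P where "P \<in> Ps" "indicator_vec P = 0" by auto
      moreover obtain v where "v \<in> P" using nonempty \<open>P \<in> Ps\<close> by blast
      ultimately show False by (metis ind zero_index zero_neq_one)
    qed
  qed
  ultimately show "dim (indicator_vec ` Ps) = card Ps"
    using dim_span_eq_card_independent card_image by (metis dim_span)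
  have "(\<chi> v. 1) = (\<Sum>P\<in>Ps. indicator_vec P)"
  proof (subst vec_eq_iff, intro allI)
    fix v
    obtain P0 where P0: "P0 \<in> Ps" "v \<in> P0" using cover by blast
    have "(\<Sum>P\<in>Ps. indicator_vec P $ v) = indicator_vec P0 $ v + (\<Sum>P\<in>Ps - {P0}. indicator_vec P $ v)"
      using P0 by (simp add: sum.remove)
    also have "(\<Sum>P\<in>Ps - {P0}. indicator_vec P $ v) = 0"
      using disjoint P0 by (intro sum.neutral) (auto simp: ind)
    finally show "(\<chi> v. 1) $ v = (\<Sum>P\<in>Ps. indicator_vec P) $ v" using P0 by (simp add: ind)
  qed
  then show "(\<chi> v. 1) \<in> span (indicator_vec ` Ps)" by (simp add: span_sum span_base)
qed

lemma qf_eq_inner: "qf x = x \<bullet> x"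
  unfolding qf_def inner_vec_def by (simp add: power2_eq_square)

lemma voronoi_common_inner:
  assumes x: "x \<in> voronoi tail head 0" "x \<in> voronoi tail head lam"
    and nu: "\<nu> \<in> latticeL tail head" "lam - \<nu> \<in> latticeL tail head"
    and proj: "lam \<bullet> \<nu> = \<nu> \<bullet> \<nu>"
  shows "2 * (x \<bullet> \<nu>) = \<nu> \<bullet> \<nu>"
proof -
  have "qf (x - 0) \<le> qf (x - \<nu>)" using x(1) nu(1) unfolding voronoi_def by blast
  moreover have "qf (x - lam) \<le> qf (x - (lam - \<nu>))" using x(2) nu(2) unfolding voronoi_def by blast
  moreover have "x - (lam - \<nu>) = (x - lam) + \<nu>" by simp
  ultimately show ?thesis
    using proj by (simp add: qf_eq_inner inner_diff_left inner_diff_right inner_add_left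
        inner_add_right inner_commute)
qed

lemma cobd_in_latticeL:
  assumes "\<And>v. f v \<in> \<int>"
  shows "cobd tail head f \<in> latticeL tail head"
proof -
  have "f = (\<lambda>v. of_int \<lfloor>f v\<rfloor>)" using assms by (metis Ints_cases floor_of_int)
  then show ?thesis unfolding latticeL_def by (intro CollectI exI[of _ "\<lambda>v. \<lfloor>f v\<rfloor>"]) simp
qed

text \<open>For a component \<open>P\<close> of \<open>G[S]\<close>, the cochains \<open>d(\<chi>\<^sub>S)\<close> and \<open>d(\<chi>\<^sub>P)\<close> agree on every edge where
  \<open>d(\<chi>\<^sub>P)\<close> is nonzero, i.e. on every edge leaving \<open>P\<close>.\<close>

lemma component_indicator_inner:
  assumes P: "P \<in> components_in tail head S"
  shows "cobd tail head (\<lambda>v. if v \<in> S then 1 else 0) \<bullet> cobd tail head (\<lambda>v. if v \<in> P then 1 else 0)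
       = cobd tail head (\<lambda>v. if v \<in> P then 1 else 0) \<bullet> cobd tail head (\<lambda>v. if v \<in> P then 1 else 0)"
proof -
  have "P \<subseteq> S" using component_subset(2)[OF P] .
  moreover have "tail e \<in> P" if "head e \<in> P" "tail e \<in> S" for e
    using component_edge_closed[OF P that] by auto
  moreover have "head e \<in> P" if "tail e \<in> P" "head e \<in> S" for e
    using component_edge_closed[OF P that] by auto
  ultimately show ?thesis
    unfolding inner_vec_def cobd_def by (intro sum.cong refl) auto
qed

lemma cobd_diff: "cobd tail head f - cobd tail head g = cobd tail head (\<lambda>v. f v - g v)"
  by (simp add: cobd_def vec_eq_iff)

lemma cobd_uminus: "- cobd tail head f = cobd tail head (\<lambda>v. - f v)"
  by (simp add: cobd_def vec_eq_iff)

lemma dim_cut_coboundaries: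
  fixes tail head :: "'e::finite \<Rightarrow> 'v::finite"
  assumes conn: "graph_connected tail head" and "C \<noteq> {}" "C \<noteq> UNIV"
  shows "dim (cobd_vec tail head ` indicator_vec ` cut_blocks tail head C) = cut_rank tail head C"
proof -
  let ?U = "span (indicator_vec ` cut_blocks tail head C)"
  have blocks: "dim (indicator_vec ` cut_blocks tail head C) = card (cut_blocks tail head C)"
    "(\<chi> v. 1) \<in> ?U"
    using partition_indicator_vecs[OF cut_blocks_partition(1)[of _ tail head C]
        cut_blocks_partition(2)[of _ tail head C] cut_blocks_partition(3)[of tail head C]] by blast+
  have "(\<chi> v. 1) \<noteq> (0 :: real^'v)" by (simp add: vec_eq_iff)
  then have "dim (cobd_vec tail head ` ?U) + 1 = dim ?U"
    using dim_image_line_kernel[OF linear_cobd_vec subspace_span blocks(2)]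
      cobd_vec_const cobd_vec_kernel[OF conn] by blast
  then show ?thesis
    using blocks(1) card_cut_blocks(1)[OF assms(2,3)] linear_span_image[OF linear_cobd_vec]
    by (metis add_right_cancel dim_span)
qed

lemma voronoi_cut_level:
  fixes tail head :: "'e::finite \<Rightarrow> 'v::finite" and C :: "'v set"
  defines "lam \<equiv> cobd tail head (\<lambda>v. if v \<in> C then 1 else 0)"
  assumes P: "P \<in> cut_blocks tail head C"
    and x: "x \<in> voronoi tail head 0 \<inter> voronoi tail head lam"
    and y: "y \<in> voronoi tail head 0 \<inter> voronoi tail head lam"
  shows "(x - y) \<bullet> cobd_vec tail head (indicator_vec P) = 0"
proof -
  let ?L = "latticeL tail head"
  define chi :: "'v set \<Rightarrow> 'v \<Rightarrow> real" where "chi S = (\<lambda>v. if v \<in> S then 1 else 0)" for S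
  define nuP where "nuP = cobd tail head (chi P)"
  have lam_compl: "lam = - cobd tail head (chi (UNIV - C))"
    unfolding lam_def chi_def by (simp add: cobd_def vec_eq_iff)
  obtain \<nu> where nu: "\<nu> = nuP \<or> \<nu> = - nuP" "\<nu> \<in> ?L" "lam - \<nu> \<in> ?L" "lam \<bullet> \<nu> = \<nu> \<bullet> \<nu>"
  proof (cases "P \<in> components_in tail head C")
    case True
    have "nuP \<in> ?L" "lam - nuP \<in> ?L"
      unfolding nuP_def lam_def chi_def cobd_diff by (auto intro: cobd_in_latticeL)
    moreover have "lam \<bullet> nuP = nuP \<bullet> nuP"
      using component_indicator_inner[OF True] unfolding lam_def nuP_def chi_def .
    ultimately show ?thesis using that by blast
  next
    case False
    then have comp: "P \<in> components_in tail head (UNIV - C)" using P unfolding cut_blocks_def by blast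
    have "- nuP \<in> ?L" "lam - - nuP \<in> ?L"
      unfolding nuP_def lam_def chi_def cobd_uminus cobd_diff by (auto intro: cobd_in_latticeL)
    moreover have "lam \<bullet> - nuP = - nuP \<bullet> - nuP"
      using component_indicator_inner[OF comp] unfolding lam_compl nuP_def chi_def by simp
    ultimately show ?thesis using that by blast
  qed
  have "2 * (x \<bullet> \<nu>) = \<nu> \<bullet> \<nu>" "2 * (y \<bullet> \<nu>) = \<nu> \<bullet> \<nu>"
    using voronoi_common_inner[OF _ _ nu(2-4)] x y by blast+
  then have "(x - y) \<bullet> nuP = 0" using nu(1) by (auto simp: inner_diff_left)
  then show ?thesis by (simp add: cobd_vec_indicator nuP_def chi_def)
qed

text \<open>The second conjunct only uses the dimension hypothesis: the face
  \<open>V\<^sub>0 \<inter> V\<^sub>\<lambda>\<close> sits inside an affine subspace of codimension \<open>\<kappa>(C, V - C) \<ge> 1\<close>.\<close>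

theorem mainTheorem15:
  fixes tail head :: "'e::finite \<Rightarrow> 'v::finite" and C :: "'v set"
  assumes "graph_connected tail head"
    and "C \<noteq> {}" and "C \<noteq> UNIV"
  defines "lam \<equiv> cobd tail head (\<lambda>v. if v \<in> C then 1 else 0)"
  shows "(\<exists>A. A \<noteq> {} \<and> affine A \<and> A \<subseteq> cutspaceK tail head \<and>
             voronoi tail head 0 \<inter> voronoi tail head lam \<subseteq> A \<and>
             int (dim (cutspaceK tail head)) - aff_dim A = int (cut_rank tail head C))
       \<and> ((voronoi tail head 0 \<inter> voronoi tail head lam) face_of voronoi tail head 0 \<and>
           aff_dim (voronoi tail head 0 \<inter> voronoi tail head lam) = int (dim (cutspaceK tail head)) - 1
           \<longrightarrow> cut_rank tail head C = 1)"
proof -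
  let ?K = "cutspaceK tail head" and ?I = "voronoi tail head 0 \<inter> voronoi tail head lam"
  let ?B = "cobd_vec tail head ` indicator_vec ` cut_blocks tail head C"
  have K: "subspace ?K"
    unfolding cutspaceK_eq_range by (rule linear_subspace_image[OF linear_cobd_vec subspace_UNIV])
  have B: "?B \<subseteq> ?K" and I: "?I \<subseteq> ?K" unfolding cutspaceK_eq_range voronoi_def by auto
  have level: "(x - y) \<bullet> b = 0" if "x \<in> ?I" "y \<in> ?I" "b \<in> ?B" for x y b
    using that voronoi_cut_level[of _ tail head C x y] unfolding lam_def by blast
  obtain A where A: "A \<noteq> {}" "affine A" "A \<subseteq> ?K" "?I \<subseteq> A"
      "aff_dim A = int (dim ?K) - int (cut_rank tail head C)"
    using affine_subspace_through_level_set[OF K B I level]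
    unfolding dim_cut_coboundaries[OF assms(1-3)] by blast
  have "aff_dim ?I \<le> aff_dim A" using aff_dim_subset[OF A(4)] .
  then have "aff_dim ?I = int (dim ?K) - 1 \<Longrightarrow> cut_rank tail head C = 1"
    using A(5) card_cut_blocks(2)[OF assms(2,3), of tail head] by linarith
  then show ?thesis using A by auto
qed

end
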